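(* Let $C^{bu}(x,y,t;z)=\sum_{\nu\in\mathcal{CP}^{bu}}x^{v(\nu)}y^{h(\nu)}t^{a(\nu)}z^{c(\nu)}$. Then $$C^{bu}(x,y,1;z)=\frac{xy(1-yz)}{(1-yz)^2-x},$$ and for $|t|<1$, $$C^{bu}(x,y,t;z)=\sum_{j\ge0}\frac{y(xt)^{j+1}}{(1-yt^{j+1}z)\prod_{i=1}^{j}(1-yt^iz)^2}.$$
   Context: A cell is a unit square in the plane whose center is an integer point and whose sides are parallel to the axes. A polyomino is a finite set of cells which is connected under edge-adjacency; polyominoes are considered up to translation. A column (resp. row) is the set of cells whose centers have a fixed $x$- (resp. $y$-) coordinate; a polyomino is convex if each column and each row is a contiguous block of cells. Number the columns $1,2,\dots$ from left to right; $u(\nu,j)$ and $b(\nu,j)$ denote the heights (center $y$-coordinates) of the top and bottom cells of column $j$. $\mathcal{CP}^{bu}$ is the set of nonempty convex polyominoes $\nu$ such that for all columns $j$ and all $s\ge j+1$, $u(\nu,s)\le u(\nu,j)$ and $b(\nu,s)\ge b(\nu,j)$. For $\nu$: $v(\nu)$ = number of columns, $h(\nu)$ = number of rows, $a(\nu)$ = number of cells, $c(\nu)$ = number of cells in the first (leftmost) column minus $1$. *)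

theory Defs
  imports "HOL-Analysis.Analysis"
begin

text \<open>A cell is identified with its integer centre (x, y).
  Polyominoes are considered up to translation; we represent each translation
  class by its unique representative whose leftmost column has x-coordinate 0
  and whose lowest row has y-coordinate 0.\<close>

type_synonym cell = "int \<times> int"

definition edge_adj :: "cell \<Rightarrow> cell \<Rightarrow> bool" where
  "edge_adj c d \<longleftrightarrow> \<bar>fst c - fst d\<bar> + \<bar>snd c - snd d\<bar> = 1"

definition polyomino :: "cell set \<Rightarrow> bool" where
  "polyomino P \<longleftrightarrow> finite P \<and> P \<noteq> {} \<and>
     (\<forall>c\<in>P. \<forall>d\<in>P. (c, d) \<in> {(p, q). p \<in> P \<and> q \<in> P \<and> edge_adj p q}\<^sup>*)"

definition column :: "cell set \<Rightarrow> int \<Rightarrow> int set" where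
  "column P i = {y. (i, y) \<in> P}"

definition row :: "cell set \<Rightarrow> int \<Rightarrow> int set" where
  "row P j = {x. (x, j) \<in> P}"

definition convex_poly :: "cell set \<Rightarrow> bool" where
  "convex_poly P \<longleftrightarrow> polyomino P \<and>
     (\<forall>i y1 y2 y. y1 \<in> column P i \<longrightarrow> y2 \<in> column P i \<longrightarrow> y1 \<le> y \<longrightarrow> y \<le> y2 \<longrightarrow> y \<in> column P i) \<and>
     (\<forall>j x1 x2 x. x1 \<in> row P j \<longrightarrow> x2 \<in> row P j \<longrightarrow> x1 \<le> x \<longrightarrow> x \<le> x2 \<longrightarrow> x \<in> row P j)"

definition utop :: "cell set \<Rightarrow> int \<Rightarrow> int" where
  "utop P i = Max (column P i)"

definition bbot :: "cell set \<Rightarrow> int \<Rightarrow> int" where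
  "bbot P i = Min (column P i)"

definition normalized :: "cell set \<Rightarrow> bool" where
  "normalized P \<longleftrightarrow> Min (fst ` P) = 0 \<and> Min (snd ` P) = 0"

definition CPbu :: "cell set set" where
  "CPbu = {P. convex_poly P \<and> normalized P \<and>
     (\<forall>j\<in>fst ` P. \<forall>s\<in>fst ` P. j < s \<longrightarrow> utop P s \<le> utop P j \<and> bbot P s \<ge> bbot P j)}"

definition vcols :: "cell set \<Rightarrow> nat" where "vcols P = card (fst ` P)"
definition hrows :: "cell set \<Rightarrow> nat" where "hrows P = card (snd ` P)"
definition area :: "cell set \<Rightarrow> nat" where "area P = card P"
definition cfirst :: "cell set \<Rightarrow> nat" where
  "cfirst P = card (column P (Min (fst ` P))) - 1"

definition weight :: "complex \<Rightarrow> complex \<Rightarrow> complex \<Rightarrow> complex \<Rightarrow> cell set \<Rightarrow> complex" where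
  "weight x y t z P = x ^ vcols P * y ^ hrows P * t ^ area P * z ^ cfirst P"

end

theory Submission
  imports Defs
begin

(* A polyomino in CP^bu is determined by its column profile: the bottom and top heights of its
   columns from left to right, the first column starting at height 0 and every column lying within
   the vertical range of its predecessor; its height is that of the first column. Deleting the
   first column, which reaches d cells below and e cells above the second one, and shifting the
   rest down by d leaves a profile with one column less. The deleted column has d + e cells more
   than the new first column, so the weight factors as x (yzt)^(d+e) times the weight of the
   smaller profile with y replaced by yt. Summing over d and e gives
   G_(j+1)(y) = x / (1 - yzt)^2 * G_j(yt) and G_0(y) = xyt / (1 - yzt) for the generating function
   G_j of the polyominoes with j + 1 columns. This is the j-th summand of the claimed series,
   which is geometric for t = 1. Absolute convergence near 0 follows from the same identities at
   norm x, norm y, norm t, norm z together with a geometric bound on G_j. *)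

section \<open>Absolutely summable families\<close>

lemma has_sum_mult_Times:
  fixes g :: "'a \<Rightarrow> 'c :: {real_normed_div_algebra, banach}" and h :: "'b \<Rightarrow> 'c"
  assumes g: "(g has_sum G) A" "(\<lambda>a. norm (g a)) summable_on A"
    and h: "(h has_sum H) B" "(\<lambda>b. norm (h b)) summable_on B"
  shows "((\<lambda>p. g (fst p) * h (snd p)) has_sum G * H) (A \<times> B)"
    and "(\<lambda>p. norm (g (fst p) * h (snd p))) summable_on A \<times> B"
proof -
  have norm_rows: "((\<lambda>b. norm (g a * h b)) has_sum norm (g a) * infsum (\<lambda>b. norm (h b)) B) B" for a
    using has_sum_cmult_right[OF has_sum_infsum[OF h(2)]] by (simp add: norm_mult)
  show abs: "(\<lambda>p. norm (g (fst p) * h (snd p))) summable_on A \<times> B"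
    by (rule summable_on_SigmaI[OF _ summable_on_cmult_left[OF g(2)]]) (use norm_rows in auto)
  note summable = abs_summable_summable[OF abs]
  show "((\<lambda>p. g (fst p) * h (snd p)) has_sum G * H) (A \<times> B)"
    by (rule has_sum_SigmaI[OF _ has_sum_cmult_left[OF g(1)] summable])
       (use has_sum_cmult_right[OF h(1)] in simp)
qed

lemma has_sum_geometric:
  fixes q :: "'a :: {real_normed_field, banach}"
  assumes "norm q < 1"
  shows "((\<lambda>n. q ^ n) has_sum 1 / (1 - q)) UNIV" and "(\<lambda>n. norm (q ^ n)) summable_on UNIV"
proof -
  have abs: "summable (\<lambda>n. norm (q ^ n))"
    using assms by (simp add: norm_power summable_geometric)
  show "((\<lambda>n. q ^ n) has_sum 1 / (1 - q)) UNIV"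
    using norm_summable_imp_has_sum[OF abs geometric_sums[OF assms]] by simp
  show "(\<lambda>n. norm (q ^ n)) summable_on UNIV"
    using abs by (simp add: summable_on_UNIV_nonneg_real_iff)
qed

lemma norm_mult_less_one:
  fixes a b :: "'a :: real_normed_div_algebra"
  shows "norm a < 1 \<Longrightarrow> norm b \<le> 1 \<Longrightarrow> norm (a * b) < 1"
  using mult_left_le[of "norm b" "norm a"] by (simp add: norm_mult)

lemma norm_one_minus_ge:
  fixes a b :: "'a :: real_normed_div_algebra"
  assumes "norm b \<le> 1"
  shows "1 - norm a \<le> norm (1 - a * b)"
  using norm_triangle_ineq2[of 1 "a * b"] mult_left_le[OF assms, of "norm a"]
  by (simp add: norm_mult)

section \<open>Column profiles\<close>

definition covers :: "nat \<times> nat \<Rightarrow> nat \<times> nat \<Rightarrow> bool" where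
  "covers p q \<longleftrightarrow> fst p \<le> fst q \<and> snd q \<le> snd p"

definition valid_profile :: "(nat \<times> nat) list \<Rightarrow> bool" where
  "valid_profile cs \<longleftrightarrow> cs \<noteq> [] \<and> fst (hd cs) = 0 \<and> (\<forall>p \<in> set cs. fst p \<le> snd p) \<and>
     sorted_wrt covers cs"

definition profiles :: "nat \<Rightarrow> (nat \<times> nat) list set" where
  "profiles j = {cs. valid_profile cs \<and> length cs = Suc j}"

definition shift_profile :: "nat \<Rightarrow> (nat \<times> nat) list \<Rightarrow> (nat \<times> nat) list" where
  "shift_profile d = map (\<lambda>p. (fst p + d, snd p + d))"

definition extend_profile :: "nat \<Rightarrow> nat \<Rightarrow> (nat \<times> nat) list \<Rightarrow> (nat \<times> nat) list" where
  "extend_profile d e cs = (0, snd (hd cs) + d + e) # shift_profile d cs"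

definition split_profile :: "(nat \<times> nat) list \<Rightarrow> nat \<times> nat \<times> (nat \<times> nat) list" where
  "split_profile cs =
     (let d = fst (hd (tl cs)) in
       (d, snd (hd cs) - snd (hd (tl cs)), map (\<lambda>p. (fst p - d, snd p - d)) (tl cs)))"

lemma valid_profile_interval:
  "valid_profile cs \<Longrightarrow> k < length cs \<Longrightarrow> fst (cs ! k) \<le> snd (cs ! k)"
  unfolding valid_profile_def using nth_mem by blast

lemma valid_profile_nested:
  assumes "valid_profile cs" "k \<le> k'" "k' < length cs"
  shows "fst (cs ! k) \<le> fst (cs ! k') \<and> snd (cs ! k') \<le> snd (cs ! k)"
proof (cases "k = k'")
  case False
  then have "covers (cs ! k) (cs ! k')"
    using assms sorted_wrt_nth_less[of covers cs k k'] by (simp add: valid_profile_def)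
  then show ?thesis by (simp add: covers_def)
qed simp

lemma valid_profile_hd: "valid_profile cs \<Longrightarrow> hd cs = cs ! 0 \<and> fst (cs ! 0) = 0"
  by (auto simp: valid_profile_def hd_conv_nth)

lemma valid_extend_profile:
  assumes "valid_profile cs"
  shows "valid_profile (extend_profile d e cs)"
  using assms
  by (cases cs) (auto simp: valid_profile_def extend_profile_def shift_profile_def covers_def
      sorted_wrt_map split_beta elim: sorted_wrt_mono_rel[rotated])

lemma split_extend_profile:
  "valid_profile cs \<Longrightarrow> split_profile (extend_profile d e cs) = (d, e, cs)"
  by (cases cs)
     (auto simp: valid_profile_def split_profile_def extend_profile_def shift_profile_def
       map_idI split_beta)

lemma extend_split_profile:
  assumes valid: "valid_profile cs" and long: "2 \<le> length cs"
    and split: "split_profile cs = (d, e, r)"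
  shows "extend_profile d e r = cs" and "valid_profile r"
proof -
  obtain a c rest where cs: "cs = a # c # rest"
    using long by (cases cs rule: remdups_adj.cases) auto
  have d: "d = fst c" and e: "e = snd a - snd c"
    and r: "r = map (\<lambda>p. (fst p - d, snd p - d)) (c # rest)"
    using split by (auto simp: split_profile_def cs Let_def)
  have a: "a = (0, snd a)" and c: "d \<le> snd c" "snd c \<le> snd a"
    and above: "\<forall>p \<in> set rest. d \<le> fst p \<and> fst p \<le> snd p"
    and sorted: "sorted_wrt covers (c # rest)"
    using valid by (auto simp: valid_profile_def covers_def cs d prod_eq_iff)
  show "extend_profile d e r = cs"
    using a c above by (auto simp: extend_profile_def shift_profile_def cs r d e intro!: map_idI)
  have "sorted_wrt covers r"
    unfolding r sorted_wrt_map by (rule sorted_wrt_mono_rel[OF _ sorted]) (auto simp: covers_def)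
  then show "valid_profile r"
    using c above by (auto simp: valid_profile_def r d)
qed

section \<open>Generating functions of profiles\<close>

definition profile_area :: "(nat \<times> nat) list \<Rightarrow> nat" where
  "profile_area cs = (\<Sum>p \<leftarrow> cs. snd p - fst p + 1)"

definition profile_weight :: "'a :: comm_semiring_1 \<Rightarrow> 'a \<Rightarrow> 'a \<Rightarrow> 'a \<Rightarrow> (nat \<times> nat) list \<Rightarrow> 'a" where
  "profile_weight x y t z cs =
     x ^ length cs * y ^ (snd (hd cs) + 1) * z ^ snd (hd cs) * t ^ profile_area cs"

(* The generating function G_j of the polyominoes with j + 1 columns, i.e. the j-th summand of
   the series in the theorem. *)
definition gf_cols :: "nat \<Rightarrow> 'a :: field \<Rightarrow> 'a \<Rightarrow> 'a \<Rightarrow> 'a \<Rightarrow> 'a" where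
  "gf_cols j x y t z = y * (x * t) ^ (j + 1) /
     ((1 - y * t ^ (j + 1) * z) * (\<Prod>i = 1..j. (1 - y * t ^ i * z)\<^sup>2))"

lemma gf_cols_0: "gf_cols 0 x y t z = x * y * t / (1 - y * z * t)"
  by (simp add: gf_cols_def mult_ac)

lemma gf_cols_Suc: "gf_cols (Suc j) x y t z = x / (1 - y * z * t)\<^sup>2 * gf_cols j x (y * t) t z"
proof -
  have "(\<Prod>i = 1..Suc j. (1 - y * t ^ i * z)\<^sup>2) =
      (1 - y * t * z)\<^sup>2 * (\<Prod>i = Suc 1..Suc j. (1 - y * t ^ i * z)\<^sup>2)"
    by (subst prod.atLeast_Suc_atMost) auto
  also have "(\<Prod>i = Suc 1..Suc j. (1 - y * t ^ i * z)\<^sup>2) = (\<Prod>i = 1..j. (1 - y * t * t ^ i * z)\<^sup>2)"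
    by (subst prod.atLeast_Suc_atMost_Suc_shift) (simp add: mult_ac)
  finally show ?thesis
    by (simp add: gf_cols_def mult_ac)
qed

lemma profile_weight_extend:
  "profile_weight x y t z (extend_profile d e cs) =
     x * ((y * z * t) ^ d * ((y * z * t) ^ e * profile_weight x (y * t) t z cs))"
proof -
  have "profile_area (extend_profile d e cs) = snd (hd cs) + d + e + 1 + profile_area cs"
    by (simp add: extend_profile_def shift_profile_def profile_area_def o_def)
  then show ?thesis
    by (simp add: profile_weight_def extend_profile_def shift_profile_def power_add
        power_mult_distrib mult_ac)
qed

lemma profiles_0: "profiles 0 = range (\<lambda>u. [(0, u)])"
proof -
  have "cs \<in> profiles 0 \<longleftrightarrow> (\<exists>u. cs = [(0, u)])" for cs
    by (cases cs) (auto simp: profiles_def valid_profile_def prod_eq_iff)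
  then show ?thesis by blast
qed

lemma length_extend_profile [simp]: "length (extend_profile d e cs) = Suc (length cs)"
  by (simp add: extend_profile_def shift_profile_def)

lemma profiles_Suc:
  "profiles (Suc j) = (\<lambda>(d, e, cs). extend_profile d e cs) ` (UNIV \<times> UNIV \<times> profiles j)"
proof (intro equalityI subsetI)
  fix cs assume cs: "cs \<in> profiles (Suc j)"
  obtain d e r where split: "split_profile cs = (d, e, r)"
    by (cases "split_profile cs")
  then have "extend_profile d e r = cs" "valid_profile r"
    using extend_split_profile[of cs] cs by (auto simp: profiles_def)
  moreover from this have "length r = Suc j"
    using cs by (auto simp: profiles_def)
  ultimately show "cs \<in> (\<lambda>(d, e, cs). extend_profile d e cs) ` (UNIV \<times> UNIV \<times> profiles j)"
    by (force simp: profiles_def)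
qed (auto simp: profiles_def valid_extend_profile)

lemma inj_on_extend_profile:
  "inj_on (\<lambda>(d, e, cs). extend_profile d e cs) (UNIV \<times> UNIV \<times> profiles j)"
  by (rule inj_on_inverseI[where g = split_profile]) (auto simp: profiles_def split_extend_profile)

lemma has_sum_profile_weight:
  fixes x y t z :: "'a :: {real_normed_field, banach}"
  assumes t: "norm t \<le> 1" and yz: "norm (y * z) < 1"
  shows "(profile_weight x y t z has_sum gf_cols j x y t z) (profiles j) \<and>
    (\<lambda>cs. norm (profile_weight x y t z cs)) summable_on profiles j"
  using yz
proof (induction j arbitrary: y)
  case 0
  define q where "q = y * z * t"
  have "norm q < 1"
    using 0 t by (simp add: q_def norm_mult_less_one)
  note geometric = has_sum_geometric[OF this]
  have weight: "profile_weight x y t z [(0, u)] = x * y * t * q ^ u" for u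
    by (simp add: profile_weight_def profile_area_def q_def power_mult_distrib mult_ac)
  have "((\<lambda>u. x * y * t * q ^ u) has_sum gf_cols 0 x y t z) UNIV"
    using has_sum_cmult_right[OF geometric(1), of "x * y * t"] by (simp add: gf_cols_0 q_def)
  moreover have "(\<lambda>u. norm (x * y * t * q ^ u)) summable_on UNIV"
    using summable_on_cmult_right[OF geometric(2), of "norm (x * y * t)"] by (simp add: norm_mult)
  ultimately show ?case
    by (simp add: profiles_0 has_sum_reindex summable_on_reindex inj_on_def o_def weight)
next
  case (Suc j)
  define q where "q = y * z * t"
  have "norm (y * t * z) < 1" "norm q < 1"
    using norm_mult_less_one[OF Suc.prems t] by (simp_all add: q_def mult_ac)
  note IH = Suc.IH[OF this(1)] and geometric = has_sum_geometric[OF this(2)]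
  define w where "w = profile_weight x (y * t) t z"
  define g where "g = (\<lambda>p. x * (q ^ fst p * (q ^ fst (snd p) * w (snd (snd p)))))"
  note product = has_sum_mult_Times[OF geometric has_sum_mult_Times[OF geometric
        IH[THEN conjunct1, folded w_def] IH[THEN conjunct2, folded w_def]]]
  have "x * (1 / (1 - q) * (1 / (1 - q) * gf_cols j x (y * t) t z)) = gf_cols (Suc j) x y t z"
    by (simp add: gf_cols_Suc q_def power2_eq_square)
  then have "(g has_sum gf_cols (Suc j) x y t z) (UNIV \<times> UNIV \<times> profiles j)"
    using has_sum_cmult_right[OF product(1), of x] by (simp add: g_def)
  moreover have "(\<lambda>p. norm (g p)) summable_on UNIV \<times> UNIV \<times> profiles j"
    using summable_on_cmult_right[OF product(2), of "norm x"] by (simp add: g_def norm_mult)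
  moreover have "profile_weight x y t z (case p of (d, e, cs) \<Rightarrow> extend_profile d e cs) = g p" for p
    by (cases p) (simp add: g_def w_def q_def profile_weight_extend)
  ultimately show ?case
    unfolding profiles_Suc has_sum_reindex[OF inj_on_extend_profile]
      summable_on_reindex[OF inj_on_extend_profile]
    by (simp add: o_def)
qed

lemma norm_gf_cols_le:
  fixes x y t z :: "'a :: real_normed_field"
  assumes t: "norm t \<le> 1" and yz: "norm (y * z) < 1"
  defines "c \<equiv> 1 - norm (y * z)"
  shows "norm (gf_cols j x y t z) \<le> norm y * norm x / c * (norm x / c\<^sup>2) ^ j"
proof -
  have c: "0 < c" using yz by (simp add: c_def)
  have factor: "c \<le> norm (1 - y * t ^ i * z)" for i
    using norm_one_minus_ge[of "t ^ i" "y * z"] t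
    by (simp add: c_def norm_power power_le_one mult_ac)
  have "c ^ (2 * j) = (\<Prod>i = 1..j. c ^ 2)"
    by (simp add: power_mult)
  also have "\<dots> \<le> (\<Prod>i = 1..j. norm (1 - y * t ^ i * z) ^ 2)"
    using c factor by (intro prod_mono power_mono conjI) auto
  finally have "c * c ^ (2 * j) \<le> norm (1 - y * t ^ (j + 1) * z) * (\<Prod>i = 1..j. norm (1 - y * t ^ i * z) ^ 2)"
    by (rule mult_mono[OF factor]) (use c in auto)
  then have denominator: "c ^ (2 * j + 1) \<le>
      norm ((1 - y * t ^ (j + 1) * z) * (\<Prod>i = 1..j. (1 - y * t ^ i * z)\<^sup>2))"
    by (simp add: norm_mult norm_power flip: prod_norm)
  have "norm (y * (x * t) ^ (j + 1)) = norm y * norm x ^ (j + 1) * norm t ^ (j + 1)"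
    by (simp add: norm_mult norm_power power_mult_distrib)
  also have "\<dots> \<le> norm y * norm x ^ (j + 1)"
    using t by (intro mult_right_le_one_le power_le_one) auto
  finally have numerator: "norm (y * (x * t) ^ (j + 1)) \<le> norm y * norm x ^ (j + 1)" .
  have "norm (gf_cols j x y t z) \<le> norm y * norm x ^ (j + 1) / c ^ (2 * j + 1)"
    unfolding gf_cols_def norm_divide
    using c by (intro frac_le numerator denominator) auto
  also have "c ^ (2 * j + 1) = c * (c\<^sup>2) ^ j"
    by (simp add: power_mult)
  also have "norm y * norm x ^ (j + 1) / (c * (c\<^sup>2) ^ j) = norm y * norm x / c * (norm x / c\<^sup>2) ^ j"
    by (simp add: power_divide)
  finally show ?thesis .
qed

lemma norm_profile_weight:
  "norm (profile_weight x y t z cs) = profile_weight (norm x) (norm y) (norm t) (norm z) cs"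
  for x y t z :: "'a :: real_normed_field"
  by (simp add: profile_weight_def norm_mult norm_power)

lemma valid_profiles_eq_Sigma: "{cs. valid_profile cs} = snd ` Sigma UNIV profiles"
proof (intro equalityI subsetI)
  fix cs assume "cs \<in> {cs. valid_profile cs}"
  then have "(length cs - 1, cs) \<in> Sigma UNIV profiles"
    by (cases cs) (auto simp: profiles_def valid_profile_def)
  then show "cs \<in> snd ` Sigma UNIV profiles"
    by (rule image_eqI[rotated]) simp
qed (auto simp: profiles_def)

lemma inj_on_snd_Sigma_profiles: "inj_on snd (Sigma UNIV profiles)"
  by (auto simp: inj_on_def profiles_def)

lemma abs_summable_profile_weight:
  fixes x y t z :: "'a :: {real_normed_field, banach}"
  assumes t: "norm t \<le> 1" and yz: "norm (y * z) < 1" and x: "norm x < (1 - norm (y * z))\<^sup>2"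
  shows "(\<lambda>cs. norm (profile_weight x y t z cs)) summable_on {cs. valid_profile cs}"
proof -
  define c where "c = 1 - norm (y * z)"
  have c: "0 < c" "norm x / c\<^sup>2 < 1" using yz x by (simp_all add: c_def)
  have norm_yz: "norm (norm y * norm z) < 1" and norm_t: "norm (norm t) \<le> 1"
    using yz t by (simp_all add: norm_mult)
  have norm_sum: "((\<lambda>cs. norm (profile_weight x y t z cs)) has_sum
      gf_cols j (norm x) (norm y) (norm t) (norm z)) (profiles j)" for j
    using has_sum_profile_weight[OF norm_t norm_yz, where x = "norm x"]
    by (simp add: norm_profile_weight)
  have bound: "gf_cols j (norm x) (norm y) (norm t) (norm z) \<le> norm y * norm x / c * (norm x / c\<^sup>2) ^ j"
    for j using norm_gf_cols_le[OF norm_t norm_yz, of j "norm x"] by (simp add: c_def norm_mult)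
  have nonneg: "0 \<le> gf_cols j (norm x) (norm y) (norm t) (norm z)" for j
    using has_sum_nonneg[OF norm_sum] by simp
  have "summable (\<lambda>j. norm y * norm x / c * (norm x / c\<^sup>2) ^ j)"
    using c by (intro summable_mult summable_geometric) simp
  then have "summable (\<lambda>j. gf_cols j (norm x) (norm y) (norm t) (norm z))"
    by (rule summable_comparison_test') (use bound nonneg in simp)
  then have "(\<lambda>j. gf_cols j (norm x) (norm y) (norm t) (norm z)) summable_on UNIV"
    using nonneg by (rule summable_nonneg_imp_summable_on)
  then have "(\<lambda>p. norm (profile_weight x y t z (snd p))) summable_on Sigma UNIV profiles"
    by (intro summable_on_SigmaI[where g = "\<lambda>j. gf_cols j (norm x) (norm y) (norm t) (norm z)"])
      (use norm_sum in auto)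
  then show ?thesis
    unfolding valid_profiles_eq_Sigma by (simp add: summable_on_reindex[OF inj_on_snd_Sigma_profiles] o_def)
qed

lemma has_sum_valid_profiles:
  fixes x y t z :: "'a :: {real_normed_field, banach}"
  assumes t: "norm t \<le> 1" and yz: "norm (y * z) < 1" and x: "norm x < (1 - norm (y * z))\<^sup>2"
  shows "summable (\<lambda>j. gf_cols j x y t z)"
    and "(profile_weight x y t z has_sum (\<Sum>j. gf_cols j x y t z)) {cs. valid_profile cs}"
proof -
  obtain S where S: "(profile_weight x y t z has_sum S) {cs. valid_profile cs}"
    using abs_summable_summable[OF abs_summable_profile_weight[OF assms]] by (auto simp: summable_on_def)
  then have "((\<lambda>p. profile_weight x y t z (snd p)) has_sum S) (Sigma UNIV profiles)"
    by (simp add: valid_profiles_eq_Sigma has_sum_reindex[OF inj_on_snd_Sigma_profiles] o_def)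
  then have "((\<lambda>j. gf_cols j x y t z) has_sum S) UNIV"
    by (rule has_sum_SigmaD) (use has_sum_profile_weight[OF t yz] in auto)
  then have "(\<lambda>j. gf_cols j x y t z) sums S"
    by (rule has_sum_imp_sums)
  then show "summable (\<lambda>j. gf_cols j x y t z)"
    and "(profile_weight x y t z has_sum (\<Sum>j. gf_cols j x y t z)) {cs. valid_profile cs}"
    using S by (auto simp: sums_iff)
qed

lemma suminf_gf_cols_at_1:
  fixes x y z :: "'a :: {real_normed_field, banach}"
  assumes yz: "norm (y * z) < 1" and x: "norm x < (1 - norm (y * z))\<^sup>2"
  shows "(\<Sum>j. gf_cols j x y 1 z) = x * y * (1 - y * z) / ((1 - y * z)\<^sup>2 - x)"
proof -
  define w where "w = y * z"
  define r where "r = x / (1 - w)\<^sup>2"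
  have w: "1 - w \<noteq> 0" using yz by (auto simp: w_def)
  have "(1 - norm w)\<^sup>2 \<le> (norm (1 - w))\<^sup>2"
    using yz norm_triangle_ineq2[of 1 w] by (intro power_mono) (auto simp: w_def)
  then have x_less: "norm x < norm ((1 - w)\<^sup>2)"
    using x by (simp add: w_def norm_power)
  then have r: "norm r < 1" and "(1 - w)\<^sup>2 - x \<noteq> 0"
    using w by (auto simp: r_def norm_divide)
  have "gf_cols j x y 1 z = x * y / (1 - w) * r ^ j" for j
    using w by (simp add: gf_cols_def r_def w_def power_divide power_mult[symmetric] field_simps)
  moreover have "(\<lambda>j. x * y / (1 - w) * r ^ j) sums (x * y / (1 - w) * (1 / (1 - r)))"
    using sums_mult[OF geometric_sums[OF r]] by (simp add: divide_inverse)
  ultimately have "(\<Sum>j. gf_cols j x y 1 z) = x * y / (1 - w) * (1 / (1 - r))"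
    by (simp add: sums_iff)
  also have "1 / (1 - r) = (1 - w)\<^sup>2 / ((1 - w)\<^sup>2 - x)"
    using w by (simp add: r_def divide_simps)
  also have "x * y / (1 - w) * ((1 - w)\<^sup>2 / ((1 - w)\<^sup>2 - x)) = x * y * (1 - w) / ((1 - w)\<^sup>2 - x)"
    using w by (simp add: power2_eq_square)
  finally show ?thesis unfolding w_def .
qed

lemma eventually_convergence_region:
  assumes "\<And>x y z. norm (y * z) < 1 \<Longrightarrow> norm x < (1 - norm (y * z))\<^sup>2 \<Longrightarrow> P x y z"
  shows "\<forall>\<^sub>F (x, y, z) in nhds ((0::complex), (0::complex), (0::complex)). P x y z"
proof -
  define U where "U = {p :: complex \<times> complex \<times> complex.
      norm (fst (snd p) * snd (snd p)) < 1 \<and> norm (fst p) < (1 - norm (fst (snd p) * snd (snd p)))\<^sup>2}"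
  have "open U"
    unfolding U_def by (rule open_Collect_conj; rule open_Collect_less; intro continuous_intros)
  then have "\<forall>\<^sub>F p in nhds (0, 0, 0). p \<in> U"
    by (rule eventually_nhds_in_open) (simp add: U_def)
  then show ?thesis
    by (rule eventually_mono) (auto simp: U_def assms)
qed

section \<open>Polyominoes of profiles\<close>

lemma Max_int_atLeastAtMost: "(a::int) \<le> b \<Longrightarrow> Max {a..b} = b"
  by (rule Max_eqI) auto

lemma Min_int_atLeastAtMost: "(a::int) \<le> b \<Longrightarrow> Min {a..b} = a"
  by (rule Min_eqI) auto

definition poly_of_profile :: "(nat \<times> nat) list \<Rightarrow> cell set" where
  "poly_of_profile cs = {(i, y). 0 \<le> i \<and> i < int (length cs) \<and>
     int (fst (cs ! nat i)) \<le> y \<and> y \<le> int (snd (cs ! nat i))}"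

lemma column_poly_of_profile:
  "column (poly_of_profile cs) i =
     (if 0 \<le> i \<and> i < int (length cs) then {int (fst (cs ! nat i))..int (snd (cs ! nat i))} else {})"
  by (auto simp: column_def poly_of_profile_def)

lemma fst_poly_of_profile:
  assumes "valid_profile cs"
  shows "fst ` poly_of_profile cs = {0..<int (length cs)}"
proof (intro equalityI subsetI)
  fix i assume i: "i \<in> {0..<int (length cs)}"
  then have "(i, int (fst (cs ! nat i))) \<in> poly_of_profile cs"
    using valid_profile_interval[OF assms, of "nat i"] by (auto simp: poly_of_profile_def)
  then show "i \<in> fst ` poly_of_profile cs" by force
qed (auto simp: poly_of_profile_def)

lemma snd_poly_of_profile:
  assumes valid: "valid_profile cs"
  shows "snd ` poly_of_profile cs = {0..int (snd (hd cs))}"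
proof (intro equalityI subsetI)
  fix y assume "y \<in> snd ` poly_of_profile cs"
  then obtain i where "0 \<le> i" "i < int (length cs)" "0 \<le> y" "y \<le> int (snd (cs ! nat i))"
    by (force simp: poly_of_profile_def)
  moreover have "snd (cs ! nat i) \<le> snd (hd cs)"
    using valid_profile_nested[OF valid, of 0 "nat i"] valid_profile_hd[OF valid] \<open>0 \<le> i\<close> \<open>i < int (length cs)\<close>
    by simp
  ultimately show "y \<in> {0..int (snd (hd cs))}"
    by simp
next
  fix y assume "y \<in> {0..int (snd (hd cs))}"
  then have "(0, y) \<in> poly_of_profile cs"
    using valid_profile_hd[OF valid] valid by (auto simp: poly_of_profile_def valid_profile_def)
  then show "y \<in> snd ` poly_of_profile cs" by force
qed

lemma finite_poly_of_profile: "valid_profile cs \<Longrightarrow> finite (poly_of_profile cs)"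
  by (rule finite_subset[OF subset_fst_snd]) (simp add: fst_poly_of_profile snd_poly_of_profile)

lemma card_poly_of_profile:
  assumes valid: "valid_profile cs"
  shows "card (poly_of_profile cs) = profile_area cs"
proof -
  have "poly_of_profile cs =
      (\<Union>k<length cs. {int k} \<times> {int (fst (cs ! k))..int (snd (cs ! k))})"
  proof (intro equalityI subsetI)
    fix p assume "p \<in> poly_of_profile cs"
    then show "p \<in> (\<Union>k<length cs. {int k} \<times> {int (fst (cs ! k))..int (snd (cs ! k))})"
      by (intro UN_I[of "nat (fst p)"]) (auto simp: poly_of_profile_def)
  qed (auto simp: poly_of_profile_def)
  then have "card (poly_of_profile cs) =
      (\<Sum>k<length cs. card ({int k} \<times> {int (fst (cs ! k))..int (snd (cs ! k))}))"
    by (simp only:) (rule card_UN_disjoint, auto)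
  also have "\<dots> = (\<Sum>k<length cs. snd (cs ! k) - fst (cs ! k) + 1)"
  proof (rule sum.cong)
    fix k assume "k \<in> {..<length cs}"
    then have "fst (cs ! k) \<le> snd (cs ! k)"
      using valid_profile_interval[OF valid] by simp
    then show "card ({int k} \<times> {int (fst (cs ! k))..int (snd (cs ! k))}) = snd (cs ! k) - fst (cs ! k) + 1"
      by (simp add: card_cartesian_product)
  qed simp
  also have "\<dots> = profile_area cs"
    by (simp add: profile_area_def sum_list_sum_nth atLeast0LessThan)
  finally show ?thesis .
qed

lemma normalized_poly_of_profile:
  assumes valid: "valid_profile cs"
  shows "normalized (poly_of_profile cs)"
  using valid
  by (simp add: normalized_def fst_poly_of_profile snd_poly_of_profile Min_int_atLeastAtMost)
     (intro Min_eqI, auto simp: valid_profile_def)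

lemma weight_poly_of_profile:
  assumes valid: "valid_profile cs"
  shows "weight x y t z (poly_of_profile cs) = profile_weight x y t z cs"
proof -
  have "Min (fst ` poly_of_profile cs) = 0"
    using normalized_poly_of_profile[OF valid] by (simp add: normalized_def)
  then have "cfirst (poly_of_profile cs) = snd (hd cs)"
    using valid_profile_hd[OF valid] valid
    by (simp add: cfirst_def column_poly_of_profile valid_profile_def)
  moreover have "hrows (poly_of_profile cs) = snd (hd cs) + 1"
    using valid by (simp add: hrows_def snd_poly_of_profile nat_add_distrib)
  ultimately show ?thesis
    using valid
    by (simp add: weight_def profile_weight_def vcols_def area_def fst_poly_of_profile
        card_poly_of_profile)
qed

lemma rtrancl_chain:
  assumes "\<And>m. m < n \<Longrightarrow> (f (Suc m), f m) \<in> R"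
  shows "(f n, f 0) \<in> R\<^sup>*"
  using assms by (induction n) (auto intro: converse_rtrancl_into_rtrancl)

definition cell_adj :: "cell set \<Rightarrow> (cell \<times> cell) set" where
  "cell_adj P = {(p, q). p \<in> P \<and> q \<in> P \<and> edge_adj p q}"

lemma polyomino_iff:
  "polyomino P \<longleftrightarrow> finite P \<and> P \<noteq> {} \<and> (\<forall>c\<in>P. \<forall>d\<in>P. (c, d) \<in> (cell_adj P)\<^sup>*)"
  by (simp add: polyomino_def cell_adj_def)

lemma sym_cell_adj: "sym (cell_adj P)"
  by (auto simp: sym_def cell_adj_def edge_adj_def abs_minus_commute)

lemma poly_of_profile_connected_origin:
  assumes valid: "valid_profile cs" and c: "c \<in> poly_of_profile cs"
  shows "(c, (0, 0)) \<in> (cell_adj (poly_of_profile cs))\<^sup>*"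
proof -
  define P where "P = poly_of_profile cs"
  obtain k y where c: "c = (int k, y)" and k: "k < length cs"
    and y: "int (fst (cs ! k)) \<le> y" "y \<le> int (snd (cs ! k))"
    using c by (auto simp: poly_of_profile_def) (metis nat_0_le nat_less_iff)
  have y0: "0 \<le> y" and "y \<le> int (snd (cs ! 0))"
    using valid_profile_nested[OF valid, of 0 k] k y by auto
  have row: "(int m, y) \<in> P" if "m \<le> k" for m
    using valid_profile_nested[OF valid that k] k y that by (auto simp: P_def poly_of_profile_def)
  have col: "(0, int m) \<in> P" if "m \<le> nat y" for m
    using valid_profile_nested[OF valid, of 0 k] valid_profile_hd[OF valid] k y that
    by (auto simp: P_def poly_of_profile_def)
  have "((int k, y), (int 0, y)) \<in> (cell_adj P)\<^sup>*"
    by (rule rtrancl_chain[of _ "\<lambda>m. (int m, y)"]) (auto simp: cell_adj_def edge_adj_def row simp del: of_nat_Suc)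
  moreover have "((0, int (nat y)), (0, int 0)) \<in> (cell_adj P)\<^sup>*"
    by (rule rtrancl_chain[of _ "\<lambda>m. (0, int m)"]) (auto simp: cell_adj_def edge_adj_def col simp del: of_nat_Suc)
  ultimately show ?thesis
    using y0 by (simp add: c P_def)
qed

lemma polyomino_poly_of_profile:
  assumes valid: "valid_profile cs"
  shows "polyomino (poly_of_profile cs)"
proof -
  have "(0, 0) \<in> poly_of_profile cs"
    using valid valid_profile_hd[OF valid] by (auto simp: poly_of_profile_def valid_profile_def)
  moreover have "(c, d) \<in> (cell_adj (poly_of_profile cs))\<^sup>*"
    if "c \<in> poly_of_profile cs" "d \<in> poly_of_profile cs" for c d
    using poly_of_profile_connected_origin[OF valid that(1)]
      poly_of_profile_connected_origin[OF valid that(2)] sym_rtrancl[OF sym_cell_adj]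
    by (meson rtrancl_trans symD)
  ultimately show ?thesis
    using finite_poly_of_profile[OF valid] by (auto simp: polyomino_iff)
qed

lemma column_range_poly_of_profile:
  assumes valid: "valid_profile cs" and k: "k < length cs"
  shows "utop (poly_of_profile cs) (int k) = int (snd (cs ! k))"
    and "bbot (poly_of_profile cs) (int k) = int (fst (cs ! k))"
  using valid_profile_interval[OF valid k] k
  by (simp_all add: utop_def bbot_def column_poly_of_profile Max_int_atLeastAtMost
      Min_int_atLeastAtMost)

lemma convex_poly_of_profile:
  assumes valid: "valid_profile cs"
  shows "convex_poly (poly_of_profile cs)"
proof -
  define P where "P = poly_of_profile cs"
  have columns: "y \<in> column P i"
    if "y1 \<in> column P i" "y2 \<in> column P i" "y1 \<le> y" "y \<le> y2" for i y1 y2 y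
    using that by (auto simp: P_def column_poly_of_profile split: if_splits)
  have rows: "x \<in> row P j"
    if "x1 \<in> row P j" "x2 \<in> row P j" "x1 \<le> x" "x \<le> x2" for j x1 x2 x
  proof -
    have x: "0 \<le> x" "nat x \<le> nat x2" "nat x2 < length cs"
      and x2: "int (fst (cs ! nat x2)) \<le> j" "j \<le> int (snd (cs ! nat x2))"
      using that by (auto simp: P_def row_def poly_of_profile_def)
    then have "int (fst (cs ! nat x)) \<le> j" "j \<le> int (snd (cs ! nat x))"
      using valid_profile_nested[OF valid x(2,3)] by linarith+
    then show ?thesis
      using x by (auto simp: P_def row_def poly_of_profile_def)
  qed
  have "polyomino P"
    using valid by (simp add: P_def polyomino_poly_of_profile)
  then show ?thesis
    unfolding convex_poly_def P_def[symmetric] using columns rows by blast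
qed

lemma poly_of_profile_in_CPbu:
  assumes valid: "valid_profile cs"
  shows "poly_of_profile cs \<in> CPbu"
proof -
  have "utop (poly_of_profile cs) s \<le> utop (poly_of_profile cs) j \<and>
      bbot (poly_of_profile cs) j \<le> bbot (poly_of_profile cs) s"
    if "j \<in> fst ` poly_of_profile cs" "s \<in> fst ` poly_of_profile cs" "j < s" for j s
  proof -
    have "j = int (nat j)" "s = int (nat s)" "nat j \<le> nat s" "nat s < length cs"
      using that fst_poly_of_profile[OF valid] by auto
    then show ?thesis
      using valid_profile_nested[OF valid, of "nat j" "nat s"]
      by (metis column_range_poly_of_profile[OF valid] le_less_trans of_nat_le_iff)
  qed
  then show ?thesis
    using convex_poly_of_profile[OF valid] normalized_poly_of_profile[OF valid]
    by (simp add: CPbu_def)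
qed

lemma inj_on_poly_of_profile: "inj_on poly_of_profile {cs. valid_profile cs}"
proof (rule inj_onI)
  fix cs cs' assume valid: "cs \<in> {cs. valid_profile cs}" "cs' \<in> {cs. valid_profile cs}"
    and eq: "poly_of_profile cs = poly_of_profile cs'"
  have "card (fst ` poly_of_profile cs) = card (fst ` poly_of_profile cs')"
    using eq by simp
  then have length: "length cs = length cs'"
    using valid by (simp add: fst_poly_of_profile)
  show "cs = cs'"
  proof (rule nth_equalityI[OF length])
    fix k assume "k < length cs"
    then show "cs ! k = cs' ! k"
      using column_range_poly_of_profile[of cs k] column_range_poly_of_profile[of cs' k]
        valid eq length by (simp add: prod_eq_iff)
  qed
qed

lemma fst_mem_between_rtrancl_cell_adj:
  assumes "(p, q) \<in> (cell_adj P)\<^sup>*" "p \<in> P"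
  shows "fst p \<le> i \<Longrightarrow> i \<le> fst q \<Longrightarrow> i \<in> fst ` P"
  using assms
proof (induction arbitrary: i rule: rtrancl_induct)
  case (step q r)
  then have "r \<in> P" "\<bar>fst q - fst r\<bar> + \<bar>snd q - snd r\<bar> = 1"
    by (auto simp: cell_adj_def edge_adj_def)
  then show ?case
    using step by (cases "i \<le> fst q") (force, force)
qed force

lemma polyomino_fst_image:
  assumes "polyomino P"
  shows "fst ` P = {Min (fst ` P)..Max (fst ` P)}"
proof (intro equalityI subsetI)
  have fin: "finite (fst ` P)" and ne: "fst ` P \<noteq> {}"
    using assms by (auto simp: polyomino_iff)
  fix i assume "i \<in> {Min (fst ` P)..Max (fst ` P)}"
  moreover obtain p q where "p \<in> P" "fst p = Min (fst ` P)" "q \<in> P" "fst q = Max (fst ` P)"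
    using Min_in[OF fin ne] Max_in[OF fin ne] by auto
  ultimately show "i \<in> fst ` P"
    using assms fst_mem_between_rtrancl_cell_adj[of p q P i] by (auto simp: polyomino_iff)
qed (use assms in \<open>auto simp: polyomino_iff\<close>)

lemma convex_poly_column:
  assumes convex: "convex_poly P" and i: "i \<in> fst ` P"
  shows "column P i = {bbot P i..utop P i}"
proof -
  have "finite (snd ` P)"
    using convex by (simp add: convex_poly_def polyomino_iff)
  moreover have "column P i \<subseteq> snd ` P"
    by (force simp: column_def)
  ultimately have fin: "finite (column P i)"
    by (rule finite_subset[rotated])
  have ne: "column P i \<noteq> {}"
    using i by (force simp: column_def)
  have "bbot P i \<in> column P i" "utop P i \<in> column P i"
    using Min_in[OF fin ne] Max_in[OF fin ne] by (simp_all add: bbot_def utop_def)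
  moreover have "column P i \<subseteq> {bbot P i..utop P i}"
    using Min_le[OF fin] Max_ge[OF fin] by (auto simp: bbot_def utop_def)
  moreover have "y \<in> column P i" if "bbot P i \<le> y" "y \<le> utop P i" for y
    using convex that \<open>bbot P i \<in> column P i\<close> \<open>utop P i \<in> column P i\<close>
    unfolding convex_poly_def by blast
  ultimately show ?thesis
    by auto
qed

lemma CPbu_fst_image:
  assumes "P \<in> CPbu"
  shows "fst ` P = {0..Max (fst ` P)}"
proof -
  have "polyomino P" "Min (fst ` P) = 0"
    using assms by (auto simp: CPbu_def convex_poly_def normalized_def)
  then show ?thesis
    by (metis polyomino_fst_image)
qed

lemma CPbu_column:
  assumes P: "P \<in> CPbu" and i: "i \<in> fst ` P"
  shows "column P i = {bbot P i..utop P i}" and "0 \<le> bbot P i" and "bbot P i \<le> utop P i"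
proof -
  show column: "column P i = {bbot P i..utop P i}"
    using P i by (intro convex_poly_column) (auto simp: CPbu_def)
  have "column P i \<noteq> {}"
    using i by (force simp: column_def)
  then show "bbot P i \<le> utop P i"
    unfolding column by simp
  then have "(i, bbot P i) \<in> P"
    using column by (simp add: column_def set_eq_iff)
  then have "bbot P i \<in> snd ` P"
    by force
  moreover have "finite (snd ` P)" "Min (snd ` P) = 0"
    using P by (auto simp: CPbu_def convex_poly_def polyomino_iff normalized_def)
  ultimately show "0 \<le> bbot P i"
    by (metis Min_le)
qed

lemma CPbu_nested:
  assumes "P \<in> CPbu" "j \<in> fst ` P" "s \<in> fst ` P" "j < s"
  shows "utop P s \<le> utop P j \<and> bbot P j \<le> bbot P s"
proof -
  have "\<forall>j\<in>fst ` P. \<forall>s\<in>fst ` P. j < s \<longrightarrow> utop P s \<le> utop P j \<and> bbot P s \<ge> bbot P j"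
    using assms(1) unfolding CPbu_def by blast
  then show ?thesis
    using assms(2-4) by blast
qed

lemma CPbu_bbot_0:
  assumes P: "P \<in> CPbu"
  shows "bbot P 0 = 0"
proof -
  have "finite (snd ` P)" "snd ` P \<noteq> {}" "Min (snd ` P) = 0"
    using P by (auto simp: CPbu_def convex_poly_def polyomino_iff normalized_def)
  then have "0 \<in> snd ` P"
    by (metis Min_in)
  then obtain i where i: "(i, 0) \<in> P"
    by force
  then have i_col: "i \<in> fst ` P"
    by force
  obtain M where M: "fst ` P = {0..M}"
    using CPbu_fst_image[OF P] by blast
  then have "0 \<le> i" "0 \<in> fst ` P"
    using i_col by auto
  have "bbot P i \<le> 0"
    using CPbu_column(1)[OF P i_col] i by (auto simp: column_def)
  moreover have "bbot P 0 \<le> bbot P i"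
  proof (cases "i = 0")
    case False
    then have "0 < i"
      using \<open>0 \<le> i\<close> by simp
    then show ?thesis
      using CPbu_nested[OF P \<open>0 \<in> fst ` P\<close> i_col] by simp
  qed simp
  ultimately show ?thesis
    using CPbu_column(2)[OF P \<open>0 \<in> fst ` P\<close>] by simp
qed

definition profile_of_poly :: "cell set \<Rightarrow> (nat \<times> nat) list" where
  "profile_of_poly P =
     map (\<lambda>k. (nat (bbot P (int k)), nat (utop P (int k)))) [0..<Suc (nat (Max (fst ` P)))]"

lemma length_profile_of_poly: "length (profile_of_poly P) = Suc (nat (Max (fst ` P)))"
  by (simp add: profile_of_poly_def)

lemma nth_profile_of_poly:
  "k < length (profile_of_poly P) \<Longrightarrow>
    profile_of_poly P ! k = (nat (bbot P (int k)), nat (utop P (int k)))"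
  by (simp add: profile_of_poly_def del: upt_Suc)

lemma CPbu_fst_image_iff:
  assumes P: "P \<in> CPbu"
  shows "i \<in> fst ` P \<longleftrightarrow> 0 \<le> i \<and> i < int (length (profile_of_poly P))"
proof -
  define M where "M = Max (fst ` P)"
  have fst_P: "fst ` P = {0..M}"
    unfolding M_def by (rule CPbu_fst_image[OF P])
  moreover have "0 \<le> M"
    using fst_P P by (auto simp: CPbu_def convex_poly_def polyomino_iff)
  moreover have "length (profile_of_poly P) = Suc (nat M)"
    by (simp add: length_profile_of_poly M_def)
  ultimately show ?thesis
    by auto
qed

lemma valid_profile_of_poly:
  assumes P: "P \<in> CPbu"
  shows "valid_profile (profile_of_poly P)"
proof -
  define cs where "cs = profile_of_poly P"
  have col: "int k \<in> fst ` P" if "k < length cs" for k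
    using that CPbu_fst_image_iff[OF P] by (simp add: cs_def)
  have nth: "cs ! k = (nat (bbot P (int k)), nat (utop P (int k)))" if "k < length cs" for k
    using that nth_profile_of_poly by (simp add: cs_def)
  have "0 < length cs"
    by (simp add: cs_def length_profile_of_poly)
  then have "cs \<noteq> []" "fst (hd cs) = 0"
    using nth[of 0] CPbu_bbot_0[OF P] by (auto simp: hd_conv_nth)
  moreover have "\<forall>p \<in> set cs. fst p \<le> snd p"
    using nth col CPbu_column(3)[OF P] by (auto simp: in_set_conv_nth nat_mono)
  moreover have "sorted_wrt covers cs"
    unfolding sorted_wrt_iff_nth_less
  proof (intro allI impI)
    fix i j assume "i < j" "j < length cs"
    then show "covers (cs ! i) (cs ! j)"
      using CPbu_nested[OF P col col, of i j] by (simp add: covers_def nth nat_mono)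
  qed
  ultimately show ?thesis
    by (simp add: valid_profile_def cs_def)
qed

lemma poly_of_profile_of_poly:
  assumes P: "P \<in> CPbu"
  shows "poly_of_profile (profile_of_poly P) = P"
proof (rule set_eqI)
  fix c :: cell
  obtain i y where c: "c = (i, y)"
    by fastforce
  show "c \<in> poly_of_profile (profile_of_poly P) \<longleftrightarrow> c \<in> P"
  proof (cases "0 \<le> i \<and> i < int (length (profile_of_poly P))")
    case True
    then have i: "i \<in> fst ` P" "nat i < length (profile_of_poly P)"
      using CPbu_fst_image_iff[OF P] by auto
    have "c \<in> P \<longleftrightarrow> y \<in> column P i"
      by (simp add: c column_def)
    then show ?thesis
      using True i CPbu_column[OF P i(1)]
      by (simp add: c poly_of_profile_def nth_profile_of_poly)
  next
    case False
    then show ?thesis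
      using CPbu_fst_image_iff[OF P, of i] by (force simp: c poly_of_profile_def)
  qed
qed

lemma CPbu_eq_image: "CPbu = poly_of_profile ` {cs. valid_profile cs}"
  using valid_profile_of_poly poly_of_profile_of_poly by (auto intro: poly_of_profile_in_CPbu)

lemma has_sum_weight_CPbu:
  fixes x y t z :: complex
  assumes "norm t \<le> 1" "norm (y * z) < 1" "norm x < (1 - norm (y * z))\<^sup>2"
  shows "(weight x y t z has_sum (\<Sum>j. gf_cols j x y t z)) CPbu"
  unfolding CPbu_eq_image has_sum_reindex[OF inj_on_poly_of_profile]
  using has_sum_valid_profiles(2)[OF assms]
  by (rule has_sum_cong[THEN iffD1, rotated]) (simp add: weight_poly_of_profile)

lemma eventually_has_sum_weight_CPbu_at_1:
  "\<forall>\<^sub>F (x, y, z) in nhds (0, 0, 0).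
     (weight x y 1 z has_sum (x * y * (1 - y * z) / ((1 - y * z)\<^sup>2 - x))) CPbu"
  by (rule eventually_convergence_region) (simp add: has_sum_weight_CPbu flip: suminf_gf_cols_at_1)

lemma eventually_has_sum_weight_CPbu:
  fixes t :: complex
  assumes "norm t < 1"
  shows "\<forall>\<^sub>F (x, y, z) in nhds (0, 0, 0).
    summable (\<lambda>j. gf_cols j x y t z) \<and> (weight x y t z has_sum (\<Sum>j. gf_cols j x y t z)) CPbu"
  using assms
  by (intro eventually_convergence_region conjI has_sum_valid_profiles(1) has_sum_weight_CPbu) simp_all

theorem lemma3p1:
  shows "(\<forall>\<^sub>F (x, y, z) in nhds ((0::complex), (0::complex), (0::complex)).
            (weight x y 1 z has_sum (x * y * (1 - y * z) / ((1 - y * z)\<^sup>2 - x))) CPbu)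
       \<and> (\<forall>t::complex. norm t < 1 \<longrightarrow>
            (\<forall>\<^sub>F (x, y, z) in nhds ((0::complex), (0::complex), (0::complex)).
              summable (\<lambda>j::nat. y * (x * t) ^ (j + 1) /
                 ((1 - y * t ^ (j + 1) * z) * (\<Prod>i = 1..j. (1 - y * t ^ i * z)\<^sup>2)))
            \<and> (weight x y t z has_sum
                 (\<Sum>j::nat. y * (x * t) ^ (j + 1) /
                   ((1 - y * t ^ (j + 1) * z) * (\<Prod>i = 1..j. (1 - y * t ^ i * z)\<^sup>2)))) CPbu))"
  using eventually_has_sum_weight_CPbu_at_1 eventually_has_sum_weight_CPbu
  unfolding gf_cols_def by blast

end
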